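(* Assume the target tube $\mathscr{T}_N$ is closed, $\mathcal{U}$ is compact, and each $f_k$ is continuous on $\mathcal{X}\times\mathcal{U}$. Let $\mathcal{E}\subseteq\mathcal{W}$ be a measurable set with $\mathbb{P}_w(w\in\mathcal{E})>0$, and let $\pi^\ast\in\mathcal{M}$ be the Markov policy built from Borel-measurable minimizers $\mu_k^\ast$ of the min-max recursion $J_N^\ast=g_N$, $J_k^\ast(x)=\inf_{u\in\mathcal{U}}\sup_{w\in\mathcal{E}}[J^\ast_{k+1}(f_k(x,u)+w)+g_k(x)]$, $g_k=1-\mathbf{1}_{\mathcal{T}_k}$. Then for every $k\in\mathbb{N}_{[0,N-1]}$ and every $y\in\mathcal{R}_k(\mathscr{T}_N,\mathcal{E})$, $$\mathbb{P}^{\pi^\ast}_{k}\Big(\bigcap_{t=k+1}^N\{x_t\in\mathcal{T}_t\}\ \Big|\ x_k=y,\ (w_k,\dots,w_{N-1})\in\mathcal{E}^{N-k}\Big)=1.$$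
   Context: Fix $N\in\mathbb{N}$, $N>0$, and write $\mathbb{N}_{[a,b]}=\{a,a+1,\dots,b\}$. Consider the discrete-time system $x_{k+1}=f_k(x_k,u_k)+w_k$, $k=0,\dots,N-1$, with state $x_k\in\mathcal{X}\subseteq\mathbb{R}^n$, input $u_k\in\mathcal{U}\subseteq\mathbb{R}^m$, disturbance $w_k\in\mathcal{W}\subseteq\mathbb{R}^n$ with $0\in\mathcal{W}$, and $f_k:\mathcal{X}\times\mathcal{U}\to\mathcal{X}$. A target tube is a sequence $\mathscr{T}_N=[\mathcal{T}_0,\dots,\mathcal{T}_N]$ of subsets of $\mathcal{X}$; it is called closed (resp. convex) if every $\mathcal{T}_k$ is closed (resp. convex). $\mathbf{1}_S$ denotes the indicator function of a set $S$. In the stochastic setting, $w_0,\dots,w_{N-1}$ are i.i.d. random vectors with an absolutely continuous distribution $\mathbb{P}_w$ on $\mathcal{W}$. A Markov policy is a tuple $\pi=[\mu_0,\dots,\mu_{N-1}]$ of universally measurable maps $\mu_k:\mathcal{X}\to\mathcal{U}$; $\mathcal{M}$ denotes the set of Markov policies. For $\pi\in\mathcal{M}$ and $x_k=y$, $\mathbb{P}^\pi_k(\cdot\,|\,y)$ denotes the probability law of $(x_{k+1},\dots,x_N)$ generated by $x_{t+1}=f_t(x_t,\mu_t(x_t))+w_t$. For $\mathcal{E}\subseteq\mathcal{W}$ and $k\in\mathbb{N}_{[0,N-1]}$, the disturbance minimal reach set $\mathcal{R}_k(\mathscr{T}_N,\mathcal{E})$ is the set of $x_k\in\mathcal{T}_k$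 for which there exist state-feedback laws $\nu_t:\mathcal{X}\to\mathcal{U}$, $t\in\mathbb{N}_{[k,N-1]}$ (no measurability required), such that for every disturbance sequence $w_k,\dots,w_{N-1}\in\mathcal{E}$ the trajectory $x_{t+1}=f_t(x_t,\nu_t(x_t))+w_t$ satisfies $x_t\in\mathcal{T}_t$ for all $t\in\mathbb{N}_{[k+1,N]}$; also $\mathcal{R}_N(\mathscr{T}_N,\mathcal{E})=\mathcal{T}_N$. *)

theory Defs
  imports "HOL-Probability.Probability"
begin

text \<open>The value
  traj f nu k y ws j is the state at absolute time k + j.\<close>
primrec traj ::
  "(nat \<Rightarrow> 'x::plus \<Rightarrow> 'u \<Rightarrow> 'x) \<Rightarrow> (nat \<Rightarrow> 'x \<Rightarrow> 'u) \<Rightarrow> nat \<Rightarrow> 'x \<Rightarrow> (nat \<Rightarrow> 'x) \<Rightarrow> nat \<Rightarrow> 'x"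
where
  "traj f nu k y ws 0 = y"
| "traj f nu k y ws (Suc j) =
     f (k + j) (traj f nu k y ws j) (nu (k + j) (traj f nu k y ws j)) + ws (k + j)"

definition stage_cost :: "(nat \<Rightarrow> 'x set) \<Rightarrow> nat \<Rightarrow> 'x \<Rightarrow> real" where
  "stage_cost T k x = 1 - indicator (T k) x"

definition reach_set ::
  "(nat \<Rightarrow> 'x::plus \<Rightarrow> 'u \<Rightarrow> 'x) \<Rightarrow> 'x set \<Rightarrow> 'u set \<Rightarrow> nat \<Rightarrow> (nat \<Rightarrow> 'x set)
    \<Rightarrow> 'x set \<Rightarrow> nat \<Rightarrow> 'x set"
where
  "reach_set f X U N T E k =
     (if k = N then T N
      else {y \<in> T k. \<exists>nu. (\<forall>t\<in>{k..<N}. \<forall>x\<in>X. nu t x \<in> U) \<and>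
              (\<forall>ws. (\<forall>t\<in>{k..<N}. ws t \<in> E) \<longrightarrow>
                     (\<forall>t\<in>{k+1..N}. traj f nu k y ws (t - k) \<in> T t))})"

definition dist_law :: "'x measure \<Rightarrow> nat \<Rightarrow> nat \<Rightarrow> (nat \<Rightarrow> 'x) measure" where
  "dist_law Pw N k = PiM {k..<N} (\<lambda>_. Pw)"

definition cond_safety_prob ::
  "'x measure \<Rightarrow> (nat \<Rightarrow> 'x::plus \<Rightarrow> 'u \<Rightarrow> 'x) \<Rightarrow> (nat \<Rightarrow> 'x \<Rightarrow> 'u) \<Rightarrow> nat
    \<Rightarrow> (nat \<Rightarrow> 'x set) \<Rightarrow> 'x set \<Rightarrow> nat \<Rightarrow> 'x \<Rightarrow> real"
where
  "cond_safety_prob Pw f mu N T E k y =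
     (let M = dist_law Pw N k;
          B = {ws \<in> space M. \<forall>t\<in>{k..<N}. ws t \<in> E};
          A = {ws \<in> space M. \<forall>t\<in>{k+1..N}. traj f mu k y ws (t - k) \<in> T t}
      in measure M (A \<inter> B) / measure M B)"

end

theory Submission
  imports Defs
begin

text \<open>A feedback witnessing \<open>y \<in> R\<^sub>k\<close> keeps the state in the tube against every
  disturbance sequence in \<open>E\<close>; since the values are built from nonnegative \<open>0/1\<close> stage
  costs, this forces \<open>J\<^sub>k(y) = 0\<close>. A zero value propagates along the closed loop of the
  minimizing policy for every disturbance in \<open>E\<close>, and a zero value at time \<open>t\<close> means
  being in \<open>T\<^sub>t\<close>. So the safety event contains the conditioning event, whose probability
  \<open>P\<^sub>w(E)^(N-k)\<close> is positive, and the conditional probability is \<open>1\<close>.\<close>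

lemma traj_cong_prefix:
  "(\<And>t. t < k + j \<Longrightarrow> ws t = ws' t) \<Longrightarrow> traj f nu k y ws j = traj f nu k y ws' j"
  by (induction j) auto

lemma stage_cost_bounds: "0 \<le> stage_cost T k x" "stage_cost T k x \<le> 1"
  by (simp_all add: stage_cost_def indicator_def)

lemma stage_cost_eq_0_iff [simp]: "stage_cost T k x = 0 \<longleftrightarrow> x \<in> T k"
  by (simp add: stage_cost_def indicator_def)

lemma measure_dist_law_box:
  assumes "prob_space Pw" and "E \<in> sets Pw"
  shows "measure (dist_law Pw N k) {ws \<in> space (dist_law Pw N k). \<forall>t\<in>{k..<N}. ws t \<in> E}
           = measure Pw E ^ (N - k)"
proof -
  interpret finite_product_prob_space "\<lambda>_. Pw" "{k..<N}"
    by (simp add: finite_product_prob_space_def finite_product_sigma_finite_def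
        product_prob_space_def product_sigma_finite_def prob_space_imp_sigma_finite
        finite_product_sigma_finite_axioms_def product_prob_space_axioms_def assms(1))
  have "{ws \<in> space (dist_law Pw N k). \<forall>t\<in>{k..<N}. ws t \<in> E} = (\<Pi>\<^sub>E t\<in>{k..<N}. E)"
    using sets.sets_into_space[OF assms(2)]
    by (auto simp: dist_law_def space_PiM PiE_def)
  then show ?thesis
    by (simp add: dist_law_def finite_measure_PiM_emb assms(2))
qed

lemma cond_safety_prob_eq_1I:
  assumes "prob_space Pw" and "E \<in> sets Pw" and "measure Pw E > 0"
    and "\<And>ws. \<forall>t\<in>{k..<N}. ws t \<in> E \<Longrightarrow> \<forall>t\<in>{k+1..N}. traj f mu k y ws (t - k) \<in> T t"
  shows "cond_safety_prob Pw f mu N T E k y = 1"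
proof -
  define M where "M = dist_law Pw N k"
  define B where "B = {ws \<in> space M. \<forall>t\<in>{k..<N}. ws t \<in> E}"
  define A where "A = {ws \<in> space M. \<forall>t\<in>{k+1..N}. traj f mu k y ws (t - k) \<in> T t}"
  have "A \<inter> B = B"
    using assms(4) by (auto simp: A_def B_def)
  moreover have "measure M B > 0"
    using measure_dist_law_box[OF assms(1,2)] assms(3) by (simp add: M_def B_def)
  ultimately show ?thesis
    unfolding cond_safety_prob_def Let_def M_def[symmetric] B_def[symmetric] A_def[symmetric]
    by simp
qed

locale minmax_reachability =
  fixes N :: nat
    and X :: "'x::plus set"
    and U :: "'u set"
    and f :: "nat \<Rightarrow> 'x \<Rightarrow> 'u \<Rightarrow> 'x"
    and T :: "nat \<Rightarrow> 'x set"
    and E :: "'x set"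
    and J :: "nat \<Rightarrow> 'x \<Rightarrow> real"
    and mu :: "nat \<Rightarrow> 'x \<Rightarrow> 'u"
  assumes step_in_X: "\<And>k x u w. k < N \<Longrightarrow> x \<in> X \<Longrightarrow> u \<in> U \<Longrightarrow> w \<in> E \<Longrightarrow> f k x u + w \<in> X"
    and tube_in_X: "\<And>k. k \<le> N \<Longrightarrow> T k \<subseteq> X"
    and E_nonempty: "E \<noteq> {}"
    and value_terminal: "\<And>x. x \<in> X \<Longrightarrow> J N x = stage_cost T N x"
    and value_step: "\<And>k x. k < N \<Longrightarrow> x \<in> X \<Longrightarrow>
          J k x = (INF u\<in>U. SUP w\<in>E. J (Suc k) (f k x u + w) + stage_cost T k x)"
    and policy_in_U: "\<And>k x. k < N \<Longrightarrow> x \<in> X \<Longrightarrow> mu k x \<in> U"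
    and policy_minimizes: "\<And>k x. k < N \<Longrightarrow> x \<in> X \<Longrightarrow>
          (SUP w\<in>E. J (Suc k) (f k x (mu k x) + w) + stage_cost T k x) = J k x"
begin

definition worst_case_cost :: "nat \<Rightarrow> 'x \<Rightarrow> 'u \<Rightarrow> real" where
  "worst_case_cost k x u = (SUP w\<in>E. J (Suc k) (f k x u + w) + stage_cost T k x)"

lemma value_eq_INF_worst_case_cost: "k < N \<Longrightarrow> x \<in> X \<Longrightarrow> J k x = (INF u\<in>U. worst_case_cost k x u)"
  by (simp add: value_step worst_case_cost_def)

lemma worst_case_cost_bounds:
  assumes "k < N" and "x \<in> X" and "u \<in> U"
    and succ: "\<And>z. z \<in> X \<Longrightarrow> 0 \<le> J (Suc k) z \<and> J (Suc k) z \<le> real (N - Suc k) + 1"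
  shows "bdd_above ((\<lambda>w. J (Suc k) (f k x u + w) + stage_cost T k x) ` E)"
    and "0 \<le> worst_case_cost k x u" and "worst_case_cost k x u \<le> real (N - k) + 1"
proof -
  have summand: "0 \<le> J (Suc k) (f k x u + w) + stage_cost T k x
      \<and> J (Suc k) (f k x u + w) + stage_cost T k x \<le> real (N - k) + 1" if "w \<in> E" for w
    using succ[OF step_in_X[OF assms(1-3) that]] stage_cost_bounds[of T k x]
      Suc_diff_Suc[OF \<open>k < N\<close>] by simp
  then show bdd: "bdd_above ((\<lambda>w. J (Suc k) (f k x u + w) + stage_cost T k x) ` E)"
    by (intro bdd_aboveI2) blast
  obtain w where "w \<in> E" using E_nonempty by blast
  then show "0 \<le> worst_case_cost k x u"
    unfolding worst_case_cost_def using summand by (intro cSUP_upper2[OF bdd]) auto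
  show "worst_case_cost k x u \<le> real (N - k) + 1"
    unfolding worst_case_cost_def using summand E_nonempty by (intro cSUP_least) auto
qed

text \<open>Boundedness is what makes the conditionally complete \<open>SUP\<close> and \<open>INF\<close> over \<open>E\<close>
  and \<open>U\<close> behave.\<close>

lemma value_bounds:
  assumes "k \<le> N" and "x \<in> X"
  shows "0 \<le> J k x \<and> J k x \<le> real (N - k) + 1"
  using assms
proof (induction k arbitrary: x rule: inc_induct)
  case base
  then show ?case by (simp add: value_terminal stage_cost_bounds)
next
  case (step k)
  have kN: "k < N" and x: "x \<in> X" using step by simp_all
  note bounds = worst_case_cost_bounds[OF kN x _ step.IH]
  have bdd: "bdd_below (worst_case_cost k x ` U)"
    using bounds(2) by (intro bdd_belowI2) blast
  have U: "U \<noteq> {}" using policy_in_U[OF kN x] by blast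
  have "J k x \<le> worst_case_cost k x (mu k x)"
    unfolding value_eq_INF_worst_case_cost[OF kN x] by (rule cINF_lower[OF bdd policy_in_U[OF kN x]])
  moreover have "0 \<le> J k x"
    unfolding value_eq_INF_worst_case_cost[OF kN x] using U bounds(2) by (intro cINF_greatest)
  ultimately show ?case
    using bounds(3)[OF policy_in_U[OF kN x]] by linarith
qed

lemma summand_le_worst_case_cost:
  assumes "k < N" and "x \<in> X" and "u \<in> U" and "w \<in> E"
  shows "J (Suc k) (f k x u + w) + stage_cost T k x \<le> worst_case_cost k x u"
  unfolding worst_case_cost_def
  using assms value_bounds[of "Suc k"] worst_case_cost_bounds(1)[OF assms(1-3)]
  by (intro cSUP_upper) auto

lemma value_le_worst_case_cost:
  assumes "k < N" and "x \<in> X" and "u \<in> U"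
  shows "J k x \<le> worst_case_cost k x u"
proof -
  have "bdd_below (worst_case_cost k x ` U)"
    using worst_case_cost_bounds(2)[OF assms(1,2) _ value_bounds[of "Suc k"]] assms(1)
    by (intro bdd_belowI2) auto
  then show ?thesis
    unfolding value_eq_INF_worst_case_cost[OF assms(1,2)] by (rule cINF_lower[OF _ assms(3)])
qed

lemma value_eq_0_imp_policy_step:
  assumes "k < N" and "x \<in> X" and "J k x = 0"
  shows "x \<in> T k" and "\<And>w. w \<in> E \<Longrightarrow> J (Suc k) (f k x (mu k x) + w) = 0"
proof -
  have u: "mu k x \<in> U" using policy_in_U[OF assms(1,2)] .
  have cost: "worst_case_cost k x (mu k x) = 0"
    using policy_minimizes[OF assms(1,2)] assms(3) by (simp add: worst_case_cost_def)
  have both_0: "J (Suc k) (f k x (mu k x) + w) = 0 \<and> stage_cost T k x = 0" if w: "w \<in> E" for w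
    using summand_le_worst_case_cost[OF assms(1,2) u w] cost stage_cost_bounds(1)[of T k x]
      value_bounds[of "Suc k", OF _ step_in_X[OF assms(1,2) u w]] assms(1)
    by (simp del: stage_cost_eq_0_iff)
  obtain w where "w \<in> E" using E_nonempty by blast
  then show "x \<in> T k" using both_0 by simp
  show "\<And>w. w \<in> E \<Longrightarrow> J (Suc k) (f k x (mu k x) + w) = 0" using both_0 by simp
qed

lemma value_eq_0I:
  assumes "k < N" and "x \<in> T k" and "u \<in> U"
    and succ_0: "\<And>w. w \<in> E \<Longrightarrow> J (Suc k) (f k x u + w) = 0"
  shows "J k x = 0"
proof -
  have x: "x \<in> X" using assms(1,2) tube_in_X[of k] by auto
  have "worst_case_cost k x u = (SUP w\<in>E. 0)"
    unfolding worst_case_cost_def using succ_0 assms(2) by (intro SUP_cong) auto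
  also have "\<dots> = 0" using E_nonempty by simp
  finally show ?thesis
    using value_le_worst_case_cost[OF assms(1) x assms(3)] value_bounds[of k x] assms(1) x
    by simp
qed

lemma value_eq_0_imp_in_tube:
  assumes "k \<le> N" and "x \<in> X" and "J k x = 0"
  shows "x \<in> T k"
proof (cases "k = N")
  case True
  then show ?thesis using assms value_terminal by simp
next
  case False
  then show ?thesis using assms value_eq_0_imp_policy_step(1) by simp
qed

lemma value_eq_0_along_robust_traj:
  assumes "k < N" and "y \<in> T k"
    and nu_in_U: "\<forall>t\<in>{k..<N}. \<forall>x\<in>X. nu t x \<in> U"
    and robust: "\<And>ws. \<forall>t\<in>{k..<N}. ws t \<in> E \<Longrightarrow> \<forall>t\<in>{k+1..N}. traj f nu k y ws (t - k) \<in> T t"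
    and "j \<le> N - k" and "\<forall>t\<in>{k..<N}. ws t \<in> E"
  shows "J (k + j) (traj f nu k y ws j) = 0"
  using assms(5,6)
proof (induction j arbitrary: ws rule: inc_induct)
  case base
  then have "traj f nu k y ws (N - k) \<in> T N"
    using robust[of ws] assms(1) by auto
  then show ?case
    using assms(1) tube_in_X[of N] value_terminal by auto
next
  case (step j)
  have kj: "k + j < N" using step.hyps(2) by simp
  define x where "x = traj f nu k y ws j"
  define u where "u = nu (k + j) x"
  have x_tube: "x \<in> T (k + j)"
  proof (cases j)
    case 0
    then show ?thesis using assms(2) by (simp add: x_def)
  next
    case (Suc i)
    then have "k + j \<in> {k+1..N}" using kj by simp
    then have "traj f nu k y ws (k + j - k) \<in> T (k + j)" using robust[OF step.prems] by blast
    then show ?thesis by (simp add: x_def)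
  qed
  then have "x \<in> X" using tube_in_X[of "k + j"] kj by auto
  then have u: "u \<in> U" using nu_in_U kj by (simp add: u_def)
  have "J (Suc (k + j)) (f (k + j) x u + w) = 0" if w: "w \<in> E" for w
  proof -
    \<comment> \<open>the trajectory up to time \<open>k + j\<close> does not see \<open>ws (k + j)\<close>, so it may be replaced by \<open>w\<close>\<close>
    let ?ws' = "ws(k + j := w)"
    have "traj f nu k y ?ws' j = x"
      unfolding x_def by (rule traj_cong_prefix) simp
    then have "traj f nu k y ?ws' (Suc j) = f (k + j) x u + w"
      by (simp add: u_def)
    moreover have "\<forall>t\<in>{k..<N}. ?ws' t \<in> E" using step.prems w by simp
    then have "J (k + Suc j) (traj f nu k y ?ws' (Suc j)) = 0" by (rule step.IH)
    ultimately show ?thesis by (metis add_Suc_right)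
  qed
  then show ?case
    using value_eq_0I[OF kj x_tube u] by (simp add: x_def)
qed

lemma value_eq_0_on_reach_set:
  assumes "k < N" and "y \<in> reach_set f X U N T E k"
  shows "J k y = 0"
proof -
  obtain nu where "y \<in> T k" and "\<forall>t\<in>{k..<N}. \<forall>x\<in>X. nu t x \<in> U"
    and "\<And>ws. \<forall>t\<in>{k..<N}. ws t \<in> E \<Longrightarrow> \<forall>t\<in>{k+1..N}. traj f nu k y ws (t - k) \<in> T t"
    using assms by (auto simp: reach_set_def)
  moreover obtain w where "w \<in> E" using E_nonempty by blast
  ultimately show ?thesis
    using value_eq_0_along_robust_traj[of k y nu 0 "\<lambda>_. w"] assms(1) by simp
qed

lemma policy_traj_value_eq_0:
  assumes "J k y = 0" and "y \<in> X" and "\<forall>t\<in>{k..<N}. ws t \<in> E" and "j \<le> N - k"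
  shows "traj f mu k y ws j \<in> X \<and> J (k + j) (traj f mu k y ws j) = 0"
  using assms(4)
proof (induction j)
  case 0
  then show ?case using assms(1,2) by simp
next
  case (Suc j)
  then have kj: "k + j < N" by simp
  with Suc assms(3) show ?case
    using step_in_X[OF kj _ policy_in_U[OF kj]] value_eq_0_imp_policy_step(2)[OF kj] by simp
qed

lemma policy_robustly_safe:
  assumes "J k y = 0" and "y \<in> X" and "\<forall>t\<in>{k..<N}. ws t \<in> E"
  shows "\<forall>t\<in>{k+1..N}. traj f mu k y ws (t - k) \<in> T t"
proof
  fix t assume t: "t \<in> {k+1..N}"
  then have "t - k \<le> N - k" by (simp add: diff_le_mono)
  from policy_traj_value_eq_0[OF assms this]
  have "traj f mu k y ws (t - k) \<in> X \<and> J t (traj f mu k y ws (t - k)) = 0"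
    using t by simp
  then show "traj f mu k y ws (t - k) \<in> T t"
    using value_eq_0_imp_in_tube t by simp
qed

end

theorem proposition1:
  fixes N :: nat
    and X W :: "(real ^ 'n) set"
    and U :: "(real ^ 'm) set"
    and f :: "nat \<Rightarrow> real ^ 'n \<Rightarrow> real ^ 'm \<Rightarrow> real ^ 'n"
    and T :: "nat \<Rightarrow> (real ^ 'n) set"
    and Pw :: "(real ^ 'n) measure"
    and E :: "(real ^ 'n) set"
    and J :: "nat \<Rightarrow> real ^ 'n \<Rightarrow> real"
    and mu :: "nat \<Rightarrow> real ^ 'n \<Rightarrow> real ^ 'm"
  assumes N_pos: "N > 0"
    and W_zero: "0 \<in> W"
    and f_maps: "\<forall>k<N. \<forall>x\<in>X. \<forall>u\<in>U. f k x u \<in> X"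
    and X_closed_dist: "\<forall>x\<in>X. \<forall>w\<in>W. x + w \<in> X"
    and tube_sub: "\<forall>k\<le>N. T k \<subseteq> X"
    and tube_closed: "\<forall>k\<le>N. closed (T k)"
    and U_compact: "compact U"
    and f_cont: "\<forall>k<N. continuous_on (X \<times> U) (\<lambda>(x, u). f k x u)"
    and Pw_prob: "prob_space Pw"
    and Pw_sets: "sets Pw = sets borel"
    and Pw_on_W: "W \<in> sets borel" "emeasure Pw W = 1"
    and Pw_ac: "absolutely_continuous lborel Pw"
    and E_meas: "E \<in> sets borel"
    and E_sub: "E \<subseteq> W"
    and E_pos: "measure Pw E > 0"
    and J_N: "\<forall>x\<in>X. J N x = stage_cost T N x"
    and J_rec: "\<forall>k<N. \<forall>x\<in>X.
                  J k x = (INF u\<in>U. SUP w\<in>E. J (Suc k) (f k x u + w) + stage_cost T k x)"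
    and mu_in_U: "\<forall>k<N. \<forall>x\<in>X. mu k x \<in> U"
    and mu_meas: "\<forall>k<N. mu k \<in> borel_measurable (restrict_space borel X)"
    and mu_min: "\<forall>k<N. \<forall>x\<in>X.
                  (SUP w\<in>E. J (Suc k) (f k x (mu k x) + w) + stage_cost T k x) = J k x"
  shows "\<forall>k<N. \<forall>y\<in>reach_set f X U N T E k. cond_safety_prob Pw f mu N T E k y = 1"
  \<comment> \<open>The topological and measurability hypotheses only serve to construct \<open>mu\<close>, which is given here.\<close>
proof (intro allI impI ballI)
  fix k y
  assume k: "k < N" and y: "y \<in> reach_set f X U N T E k"
  interpret minmax_reachability N X U f T E J mu
  proof
    show "E \<noteq> {}" using E_pos by auto
  qed (use f_maps X_closed_dist E_sub tube_sub J_N J_rec mu_in_U mu_min in auto)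
  have "J k y = 0" using value_eq_0_on_reach_set[OF k y] .
  moreover have "y \<in> X" using y k tube_in_X[of k] by (auto simp: reach_set_def)
  moreover have "E \<in> sets Pw" using E_meas Pw_sets by simp
  ultimately show "cond_safety_prob Pw f mu N T E k y = 1"
    using cond_safety_prob_eq_1I[OF Pw_prob _ E_pos] policy_robustly_safe by blast
qed

end
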